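(* Let $(G,\cdot)$ be a group and let $\psi\in\operatorname{End}(G,\cdot)$. Consider the subset $$N=\{\,\nu(g):g\in G\,\},\qquad \nu(g)\colon h\mapsto g\cdot\psi(g)\cdot h\cdot\psi(g)^{-1},$$ of $\operatorname{Perm}(G)$, and define $g\circ h=g\cdot\psi(g)\cdot h\cdot\psi(g)^{-1}$ for $g,h\in G$. (1) The following are equivalent: (a) $N$ is a subgroup of $\operatorname{Perm}(G)$; (b) $N$ is a regular subgroup of $\operatorname{Perm}(G)$ which normalises $\lambda(G)$; (c) $\psi([\psi(G),G])\le Z(G,\cdot)$; (d) $(G,\cdot,\circ)$ is a skew brace. (2) The following are equivalent: (a) $N$ is a regular subgroup of $\operatorname{Perm}(G)$ which normalises, and is normalised by, $\lambda(G)$; (b) $\psi([G,G])\le Z(G,\cdot)$; (c) $(G,\cdot,\circ)$ is a bi-skew brace.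
   Context: $\operatorname{Perm}(G)$ denotes the group of all permutations of the underlying set of $G$, and $\lambda\colon G\to\operatorname{Perm}(G)$, $\lambda(g)(h)=g\cdot h$, is the left regular representation. A subset $N\subseteq\operatorname{Perm}(G)$ is regular if the map $N\to G$, $\eta\mapsto\eta(1)$, is a bijection. "$N$ normalises $\lambda(G)$" means $\eta\lambda(G)\eta^{-1}=\lambda(G)$ for all $\eta\in N$; "$N$ is normalised by $\lambda(G)$" means $\lambda(g)N\lambda(g)^{-1}=N$ for all $g\in G$. Commutators are $[x,y]=xyx^{-1}y^{-1}$, and for subgroups $A,B$, $[A,B]$ is the subgroup generated by all $[a,b]$, $a\in A,b\in B$; $\psi(G)$ is the image of $\psi$. $Z(G,\cdot)$ is the centre. A skew (left) brace is a triple $(G,\cdot,\circ)$ where $(G,\cdot)$ and $(G,\circ)$ are groups and $g\circ(h\cdot k)=(g\circ h)\cdot g^{-1}\cdot(g\circ k)$ for all $g,h,k$ (with $g^{-1}$ the inverse in $(G,\cdot)$). A bi-skew brace is a triple $(G,\cdot,\circ)$ such that both $(G,\cdot,\circ)$ and $(G,\circ,\cdot)$ are skew braces. *)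

theory Defs
  imports "HOL-Algebra.Algebra"
begin

definition centre :: "('a, 'b) monoid_scheme \<Rightarrow> 'a set" where
  "centre G = {z \<in> carrier G. \<forall>x \<in> carrier G. z \<otimes>\<^bsub>G\<^esub> x = x \<otimes>\<^bsub>G\<^esub> z}"

definition commutator_subgroup :: "('a, 'b) monoid_scheme \<Rightarrow> 'a set \<Rightarrow> 'a set \<Rightarrow> 'a set" where
  "commutator_subgroup G A B = generate G
     (\<Union>a \<in> A. \<Union>b \<in> B. {a \<otimes>\<^bsub>G\<^esub> b \<otimes>\<^bsub>G\<^esub> inv\<^bsub>G\<^esub> a \<otimes>\<^bsub>G\<^esub> inv\<^bsub>G\<^esub> b})"

definition lreg :: "('a, 'b) monoid_scheme \<Rightarrow> 'a \<Rightarrow> ('a \<Rightarrow> 'a)" where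
  "lreg G g = (\<lambda>h \<in> carrier G. g \<otimes>\<^bsub>G\<^esub> h)"

definition regular_perm :: "('a, 'b) monoid_scheme \<Rightarrow> ('a \<Rightarrow> 'a) set \<Rightarrow> bool" where
  "regular_perm G N \<longleftrightarrow> bij_betw (\<lambda>\<eta>. \<eta> \<one>\<^bsub>G\<^esub>) N (carrier G)"

definition normalises_lreg :: "('a, 'b) monoid_scheme \<Rightarrow> ('a \<Rightarrow> 'a) set \<Rightarrow> bool" where
  "normalises_lreg G N \<longleftrightarrow>
     (\<forall>\<eta> \<in> N. (\<lambda>g. \<eta> \<otimes>\<^bsub>BijGroup (carrier G)\<^esub> lreg G g
                  \<otimes>\<^bsub>BijGroup (carrier G)\<^esub> inv\<^bsub>BijGroup (carrier G)\<^esub> \<eta>) ` carrier G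
              = lreg G ` carrier G)"

definition normalised_by_lreg :: "('a, 'b) monoid_scheme \<Rightarrow> ('a \<Rightarrow> 'a) set \<Rightarrow> bool" where
  "normalised_by_lreg G N \<longleftrightarrow>
     (\<forall>g \<in> carrier G. (\<lambda>\<eta>. lreg G g \<otimes>\<^bsub>BijGroup (carrier G)\<^esub> \<eta>
                  \<otimes>\<^bsub>BijGroup (carrier G)\<^esub> inv\<^bsub>BijGroup (carrier G)\<^esub> lreg G g) ` N = N)"

text \<open>Skew (left) brace (A-operation = dot, B-operation = circ) on a common carrier.\<close>
definition skew_brace :: "('a, 'b) monoid_scheme \<Rightarrow> ('a, 'c) monoid_scheme \<Rightarrow> bool" where
  "skew_brace A B \<longleftrightarrow> group A \<and> group B \<and> carrier A = carrier B \<and>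
     (\<forall>g \<in> carrier A. \<forall>h \<in> carrier A. \<forall>k \<in> carrier A.
        g \<otimes>\<^bsub>B\<^esub> (h \<otimes>\<^bsub>A\<^esub> k) = (g \<otimes>\<^bsub>B\<^esub> h) \<otimes>\<^bsub>A\<^esub> inv\<^bsub>A\<^esub> g \<otimes>\<^bsub>A\<^esub> (g \<otimes>\<^bsub>B\<^esub> k))"

definition bi_skew_brace :: "('a, 'b) monoid_scheme \<Rightarrow> ('a, 'c) monoid_scheme \<Rightarrow> bool" where
  "bi_skew_brace A B \<longleftrightarrow> skew_brace A B \<and> skew_brace B A"

end

theory Submission
  imports Defs
begin

text \<open>
  Each \<open>\<nu>(g)\<close> is left translation by \<open>g\<close> composed with conjugation by \<open>\<psi>(g)\<close>, and a map
  \<open>\<lambda>(m) \<circ> conj(a)\<close> lies in \<open>N\<close> iff \<open>\<psi>(m)\<inverse> a\<close> is central. In particular \<open>N\<close> is always regular and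
  normalises \<open>\<lambda>(G)\<close>. Since \<open>\<nu>(g) \<nu>(k)\<close> maps \<open>h\<close> to \<open>g \<circ> (k \<circ> h)\<close> and \<open>1\<close> to \<open>g \<circ> k\<close>, \<open>N\<close> is closed
  under composition iff \<open>\<circ>\<close> is associative, iff \<open>\<psi>([\<psi>(g), k])\<close> is always central. Then \<open>(G,\<circ>)\<close>
  is a group (right inverses exist because \<open>\<nu>(g)\<close> is onto) and \<open>\<nu>\<close> maps it homomorphically
  onto \<open>N\<close>; the skew brace identity for \<open>(G,\<cdot>,\<circ>)\<close> holds unconditionally. Likewise
  \<open>\<lambda>(g) \<nu>(k) \<lambda>(g)\<inverse>\<close> and the brace identity for \<open>(G,\<circ>,\<cdot>)\<close> reduce to centrality of
  \<open>\<psi>([k\<psi>(k), g])\<close> and of \<open>\<psi>([g, h])\<close>, which given the first condition both amount to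
  \<open>\<psi>([G,G]) \<le> Z(G)\<close>.
\<close>

definition commutator :: "('a, 'b) monoid_scheme \<Rightarrow> 'a \<Rightarrow> 'a \<Rightarrow> 'a" where
  "commutator G x y = x \<otimes>\<^bsub>G\<^esub> y \<otimes>\<^bsub>G\<^esub> inv\<^bsub>G\<^esub> x \<otimes>\<^bsub>G\<^esub> inv\<^bsub>G\<^esub> y"

lemma restrict_eq_restrict_iff: "(\<lambda>x\<in>A. f x) = (\<lambda>x\<in>A. g x) \<longleftrightarrow> (\<forall>x\<in>A. f x = g x)"
  by (metis restrict_apply' restrict_ext)

lemma carrier_BijGroup [simp]: "carrier (BijGroup S) = Bij S"
  by (simp add: BijGroup_def)

lemma BijGroup_mult: "f \<in> Bij S \<Longrightarrow> g \<in> Bij S \<Longrightarrow> f \<otimes>\<^bsub>BijGroup S\<^esub> g = (\<lambda>x\<in>S. f (g x))"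
  by (simp add: BijGroup_def compose_def)

lemma BijGroup_one: "\<one>\<^bsub>BijGroup S\<^esub> = (\<lambda>x\<in>S. x)"
  by (simp add: BijGroup_def)

context group
begin

lemma inv_mult_cancel [simp]: "x \<in> carrier G \<Longrightarrow> y \<in> carrier G \<Longrightarrow> inv x \<otimes> (x \<otimes> y) = y"
  by (simp flip: m_assoc)

lemma mult_inv_cancel [simp]: "x \<in> carrier G \<Longrightarrow> y \<in> carrier G \<Longrightarrow> x \<otimes> (inv x \<otimes> y) = y"
  by (simp flip: m_assoc)

lemma centreI: "z \<in> carrier G \<Longrightarrow> (\<And>x. x \<in> carrier G \<Longrightarrow> z \<otimes> x = x \<otimes> z) \<Longrightarrow> z \<in> centre G"
  unfolding centre_def by blast

lemma centreD: "z \<in> centre G \<Longrightarrow> x \<in> carrier G \<Longrightarrow> z \<otimes> x = x \<otimes> z"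
  unfolding centre_def by blast

lemma centre_subset: "centre G \<subseteq> carrier G"
  unfolding centre_def by blast

lemma centre_conj:
  assumes z: "z \<in> centre G" and x: "x \<in> carrier G"
  shows "x \<otimes> z \<otimes> inv x = z"
proof -
  have "x \<otimes> z = z \<otimes> x" using centreD[OF z x] by simp
  then show ?thesis using z x centre_subset by (auto simp: m_assoc)
qed

lemma subgroup_centre: "subgroup (centre G) G"
proof (rule subgroupI)
  fix a b assume a: "a \<in> centre G" and b: "b \<in> centre G"
  then have [simp]: "a \<in> carrier G" "b \<in> carrier G"
    using centre_subset by auto
  show "inv a \<in> centre G"
  proof (rule centreI)
    fix x assume x: "x \<in> carrier G"
    have "inv a \<otimes> x = inv a \<otimes> (x \<otimes> a) \<otimes> inv a"
      using x by (simp add: m_assoc)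
    also have "\<dots> = x \<otimes> inv a"
      using x by (simp add: centreD[OF a x, symmetric] m_assoc[symmetric])
    finally show "inv a \<otimes> x = x \<otimes> inv a" .
  qed simp
  show "a \<otimes> b \<in> centre G"
  proof (rule centreI)
    fix x assume x: "x \<in> carrier G"
    have "a \<otimes> b \<otimes> x = a \<otimes> (x \<otimes> b)" using x by (simp add: m_assoc centreD[OF b x])
    also have "\<dots> = x \<otimes> (a \<otimes> b)" using x by (simp add: centreD[OF a x] flip: m_assoc)
    finally show "a \<otimes> b \<otimes> x = x \<otimes> (a \<otimes> b)" .
  qed simp
next
  have "\<one> \<in> centre G" by (rule centreI) simp_all
  then show "centre G \<noteq> {}" by blast
qed (rule centre_subset)

lemma centre_conj_iff:
  assumes "x \<in> carrier G" "z \<in> carrier G"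
  shows "x \<otimes> z \<otimes> inv x \<in> centre G \<longleftrightarrow> z \<in> centre G"
proof
  assume w: "x \<otimes> z \<otimes> inv x \<in> centre G"
  have "z = inv x \<otimes> (x \<otimes> z \<otimes> inv x) \<otimes> inv (inv x)"
    using assms by (simp add: m_assoc)
  also have "\<dots> = x \<otimes> z \<otimes> inv x"
    using assms by (intro centre_conj w) simp
  finally show "z \<in> centre G" using w by simp
qed (use assms centre_conj in simp)

lemma conj_eq_conj_iff:
  assumes a: "a \<in> carrier G" and b: "b \<in> carrier G"
  shows "(\<forall>h\<in>carrier G. a \<otimes> h \<otimes> inv a = b \<otimes> h \<otimes> inv b) \<longleftrightarrow> inv b \<otimes> a \<in> centre G"
proof -
  have "a \<otimes> h \<otimes> inv a = b \<otimes> h \<otimes> inv b \<longleftrightarrow> inv b \<otimes> a \<otimes> h = h \<otimes> (inv b \<otimes> a)"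
    if h: "h \<in> carrier G" for h
  proof -
    have "a \<otimes> h \<otimes> inv a = b \<otimes> (inv b \<otimes> a \<otimes> h) \<otimes> inv a"
      and "b \<otimes> h \<otimes> inv b = b \<otimes> (h \<otimes> (inv b \<otimes> a)) \<otimes> inv a"
      using a b h by (simp_all add: m_assoc)
    then show ?thesis
      using a b h by simp
  qed
  then show ?thesis
    using a b by (auto intro: centreI dest: centreD)
qed

lemma mult_in_centre_iff:
  assumes z: "z \<in> centre G" and y: "y \<in> carrier G"
  shows "z \<otimes> y \<in> centre G \<longleftrightarrow> y \<in> centre G"
proof
  have zc: "z \<in> carrier G" using z centre_subset by blast
  assume "z \<otimes> y \<in> centre G"
  then have "inv z \<otimes> (z \<otimes> y) \<in> centre G"
    using subgroup.m_closed[OF subgroup_centre subgroup.m_inv_closed[OF subgroup_centre z]] by blast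
  then show "y \<in> centre G" using zc y by simp
qed (use z in \<open>simp add: subgroup.m_closed[OF subgroup_centre]\<close>)

lemma conj_image_carrier: "w \<in> carrier G \<Longrightarrow> (\<lambda>g. w \<otimes> g \<otimes> inv w) ` carrier G = carrier G"
proof (intro equalityI subsetI)
  fix x assume "w \<in> carrier G" "x \<in> carrier G"
  then have "x = w \<otimes> (inv w \<otimes> x \<otimes> w) \<otimes> inv w" and "inv w \<otimes> x \<otimes> w \<in> carrier G"
    by (simp_all add: m_assoc)
  then show "x \<in> (\<lambda>g. w \<otimes> g \<otimes> inv w) ` carrier G" by blast
qed auto

lemma conj_image_eq_if_subset:
  assumes S: "S \<subseteq> carrier G" "\<And>x. x \<in> S \<Longrightarrow> inv x \<in> S" and N: "N \<subseteq> carrier G"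
    and conj: "\<And>x. x \<in> S \<Longrightarrow> (\<lambda>n. x \<otimes> n \<otimes> inv x) ` N \<subseteq> N"
    and x: "x \<in> S"
  shows "(\<lambda>n. x \<otimes> n \<otimes> inv x) ` N = N"
proof (intro equalityI subsetI)
  fix n assume n: "n \<in> N"
  have xc: "x \<in> carrier G" using x S by blast
  have "inv x \<otimes> n \<otimes> inv (inv x) \<in> N"
    using conj[OF S(2)[OF x]] n by blast
  moreover have "n = x \<otimes> (inv x \<otimes> n \<otimes> inv (inv x)) \<otimes> inv x"
    using xc n N by (auto simp: m_assoc)
  ultimately show "n \<in> (\<lambda>n. x \<otimes> n \<otimes> inv x) ` N" by blast
qed (use conj x in blast)

lemma commutator_closed [simp]: "x \<in> carrier G \<Longrightarrow> y \<in> carrier G \<Longrightarrow> commutator G x y \<in> carrier G"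
  by (simp add: commutator_def)

lemma commutator_mult_left:
  "a \<in> carrier G \<Longrightarrow> b \<in> carrier G \<Longrightarrow> g \<in> carrier G \<Longrightarrow>
   commutator G (a \<otimes> b) g = a \<otimes> commutator G b g \<otimes> inv a \<otimes> commutator G a g"
  by (simp add: commutator_def m_assoc inv_mult_group)

lemma lreg_closed: "g \<in> carrier G \<Longrightarrow> lreg G g \<in> Bij (carrier G)"
proof -
  assume g: "g \<in> carrier G"
  have "bij_betw (lreg G g) (carrier G) (carrier G)"
    by (rule bij_betwI[where g = "\<lambda>y. inv g \<otimes> y"]) (use g in \<open>auto simp: lreg_def\<close>)
  then show ?thesis
    by (simp add: Bij_def lreg_def)
qed

lemma inv_lreg:
  assumes g: "g \<in> carrier G"
  shows "inv\<^bsub>BijGroup (carrier G)\<^esub> lreg G g = lreg G (inv g)"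
proof (rule group.inv_equality[OF group_BijGroup])
  show "lreg G (inv g) \<otimes>\<^bsub>BijGroup (carrier G)\<^esub> lreg G g = \<one>\<^bsub>BijGroup (carrier G)\<^esub>"
    using g lreg_closed[of g] lreg_closed[of "inv g"]
    by (simp add: BijGroup_mult BijGroup_one) (simp add: lreg_def restrict_eq_restrict_iff flip: m_assoc)
qed (use g lreg_closed in simp_all)

end

lemma (in monoid) group_if_r_inv_ex:
  assumes r_inv_ex: "\<And>x. x \<in> carrier G \<Longrightarrow> \<exists>y\<in>carrier G. x \<otimes> y = \<one>"
  shows "group G"
proof (rule groupI)
  fix x assume x: "x \<in> carrier G"
  obtain y where y: "y \<in> carrier G" "x \<otimes> y = \<one>" using r_inv_ex[OF x] by blast
  obtain z where z: "z \<in> carrier G" "y \<otimes> z = \<one>" using r_inv_ex[OF y(1)] by blast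
  have "y \<otimes> x = y \<otimes> x \<otimes> (y \<otimes> z)" using x y z by simp
  also have "\<dots> = y \<otimes> (x \<otimes> y) \<otimes> z" using x y(1) z(1) by (simp add: m_assoc)
  also have "\<dots> = \<one>" using x y z by simp
  finally have "y \<otimes> x = \<one>" .
  then show "\<exists>y\<in>carrier G. y \<otimes> x = \<one>" using y by blast
qed (simp_all add: m_assoc)

lemma (in group_hom) subgroup_vimage: "subgroup Z H \<Longrightarrow> subgroup {x \<in> carrier G. h x \<in> Z} G"
  by (rule G.subgroupI) (auto simp: subgroup.m_closed subgroup.m_inv_closed subgroup.one_closed)

lemma (in group_hom) image_generate_subset_iff:
  assumes "subgroup Z H" "S \<subseteq> carrier G"
  shows "h ` generate G S \<subseteq> Z \<longleftrightarrow> h ` S \<subseteq> Z"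
proof
  assume "h ` S \<subseteq> Z"
  then have "generate G S \<subseteq> {x \<in> carrier G. h x \<in> Z}"
    using assms by (intro G.generate_subgroup_incl subgroup_vimage) auto
  then show "h ` generate G S \<subseteq> Z" by blast
qed (auto intro: generate.incl)

locale group_endo = group_hom G G \<psi> for G (structure) and \<psi>
begin

abbreviation Perm :: "('a \<Rightarrow> 'a) monoid" where
  "Perm \<equiv> BijGroup (carrier G)"

definition circ_mult :: "'a \<Rightarrow> 'a \<Rightarrow> 'a" where
  "circ_mult g h = g \<otimes> \<psi> g \<otimes> h \<otimes> inv (\<psi> g)"

definition nu :: "'a \<Rightarrow> 'a \<Rightarrow> 'a" where
  "nu g = (\<lambda>h\<in>carrier G. circ_mult g h)"

text \<open>\<open>\<nu>(g)\<close>, products in \<open>N\<close> and conjugates of \<open>N\<close> by \<open>\<lambda>(G)\<close> all have this shape.\<close>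

definition lmult_conj :: "'a \<Rightarrow> 'a \<Rightarrow> 'a \<Rightarrow> 'a" where
  "lmult_conj m a = (\<lambda>h\<in>carrier G. m \<otimes> (a \<otimes> h \<otimes> inv a))"

lemma circ_mult_closed [simp]: "g \<in> carrier G \<Longrightarrow> h \<in> carrier G \<Longrightarrow> circ_mult g h \<in> carrier G"
  by (simp add: circ_mult_def)

lemma circ_mult_one_left [simp]: "h \<in> carrier G \<Longrightarrow> circ_mult \<one> h = h"
  by (simp add: circ_mult_def)

lemma circ_mult_one_right [simp]: "g \<in> carrier G \<Longrightarrow> circ_mult g \<one> = g"
  by (simp add: circ_mult_def m_assoc)

lemma circ_mult_skew_distrib:
  "g \<in> carrier G \<Longrightarrow> h \<in> carrier G \<Longrightarrow> k \<in> carrier G \<Longrightarrow>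
   circ_mult g (h \<otimes> k) = circ_mult g h \<otimes> inv g \<otimes> circ_mult g k"
  by (simp add: circ_mult_def m_assoc)

lemma circ_mult_eq_iff:
  "g \<in> carrier G \<Longrightarrow> x \<in> carrier G \<Longrightarrow> y \<in> carrier G \<Longrightarrow>
   circ_mult g x = y \<longleftrightarrow> x = inv (\<psi> g) \<otimes> inv g \<otimes> y \<otimes> \<psi> g"
  by (auto simp: circ_mult_def m_assoc)

lemma lmult_conj_closed:
  assumes m: "m \<in> carrier G" and a: "a \<in> carrier G"
  shows "lmult_conj m a \<in> Bij (carrier G)"
proof -
  have "bij_betw (lmult_conj m a) (carrier G) (carrier G)"
    by (rule bij_betwI[where g = "\<lambda>y. inv a \<otimes> (inv m \<otimes> y) \<otimes> a"])
      (use m a in \<open>auto simp: lmult_conj_def m_assoc\<close>)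
  then show ?thesis
    by (simp add: Bij_def lmult_conj_def)
qed

lemma lmult_conj_eq_iff:
  assumes "m \<in> carrier G" "a \<in> carrier G" "m' \<in> carrier G" "a' \<in> carrier G"
  shows "lmult_conj m a = lmult_conj m' a' \<longleftrightarrow> m = m' \<and> inv a' \<otimes> a \<in> centre G"
proof -
  have "lmult_conj m a = lmult_conj m' a'
      \<longleftrightarrow> (\<forall>h\<in>carrier G. m \<otimes> (a \<otimes> h \<otimes> inv a) = m' \<otimes> (a' \<otimes> h \<otimes> inv a'))"
    by (simp add: lmult_conj_def restrict_eq_restrict_iff)
  also have "\<dots> \<longleftrightarrow> m = m' \<and> (\<forall>h\<in>carrier G. a \<otimes> h \<otimes> inv a = a' \<otimes> h \<otimes> inv a')"
  proof (intro iffI conjI)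
    assume eq: "\<forall>h\<in>carrier G. m \<otimes> (a \<otimes> h \<otimes> inv a) = m' \<otimes> (a' \<otimes> h \<otimes> inv a')"
    from eq[rule_format, of \<one>] show "m = m'"
      using assms by simp
    with eq show "\<forall>h\<in>carrier G. a \<otimes> h \<otimes> inv a = a' \<otimes> h \<otimes> inv a'"
      using assms by simp
  qed (use assms in simp)
  also have "\<dots> \<longleftrightarrow> m = m' \<and> inv a' \<otimes> a \<in> centre G"
    using assms by (simp add: conj_eq_conj_iff)
  finally show ?thesis .
qed

lemma nu_eq_lmult_conj: "g \<in> carrier G \<Longrightarrow> nu g = lmult_conj g (\<psi> g)"
  by (simp add: nu_def lmult_conj_def circ_mult_def m_assoc restrict_eq_restrict_iff)

lemma nu_closed: "g \<in> carrier G \<Longrightarrow> nu g \<in> Bij (carrier G)"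
  using lmult_conj_closed[of g "\<psi> g"] by (simp add: nu_eq_lmult_conj)

lemma nu_apply_one: "g \<in> carrier G \<Longrightarrow> nu g \<one> = g"
  by (simp add: nu_def)

lemma lmult_conj_in_nu_image_iff:
  assumes "m \<in> carrier G" "a \<in> carrier G"
  shows "lmult_conj m a \<in> nu ` carrier G \<longleftrightarrow> inv (\<psi> m) \<otimes> a \<in> centre G"
proof
  assume "inv (\<psi> m) \<otimes> a \<in> centre G"
  then have "lmult_conj m a = nu m"
    using assms by (simp add: nu_eq_lmult_conj lmult_conj_eq_iff)
  then show "lmult_conj m a \<in> nu ` carrier G"
    using assms by blast
qed (use assms in \<open>auto simp: nu_eq_lmult_conj lmult_conj_eq_iff\<close>)

lemma regular_nu_image: "regular_perm G (nu ` carrier G)"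
  unfolding regular_perm_def
  by (rule bij_betw_byWitness[where f' = nu]) (auto simp: nu_apply_one)

lemma nu_mult:
  assumes "g \<in> carrier G" "k \<in> carrier G"
  shows "nu g \<otimes>\<^bsub>Perm\<^esub> nu k = (\<lambda>h\<in>carrier G. circ_mult g (circ_mult k h))"
  using nu_closed[OF assms(1)] nu_closed[OF assms(2)] assms
  by (simp add: BijGroup_mult) (simp add: nu_def restrict_eq_restrict_iff)

lemma nu_mult_eq_lmult_conj:
  "g \<in> carrier G \<Longrightarrow> k \<in> carrier G \<Longrightarrow> nu g \<otimes>\<^bsub>Perm\<^esub> nu k = lmult_conj (circ_mult g k) (\<psi> g \<otimes> \<psi> k)"
  by (simp add: nu_mult lmult_conj_def restrict_eq_restrict_iff circ_mult_def m_assoc inv_mult_group)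

lemma nu_mult_in_nu_image_iff:
  assumes "g \<in> carrier G" "k \<in> carrier G"
  shows "nu g \<otimes>\<^bsub>Perm\<^esub> nu k \<in> nu ` carrier G \<longleftrightarrow> \<psi> (commutator G (\<psi> g) (inv k)) \<in> centre G"
proof -
  have "inv (\<psi> (circ_mult g k)) \<otimes> (\<psi> g \<otimes> \<psi> k) = \<psi> (commutator G (\<psi> g) (inv k))"
    using assms by (simp add: circ_mult_def commutator_def m_assoc inv_mult_group)
  then show ?thesis
    using assms by (simp add: nu_mult_eq_lmult_conj lmult_conj_in_nu_image_iff)
qed

lemma nu_mult_eq_nu_circ_mult_iff:
  "g \<in> carrier G \<Longrightarrow> k \<in> carrier G \<Longrightarrow>
   nu g \<otimes>\<^bsub>Perm\<^esub> nu k = nu (circ_mult g k) \<longleftrightarrow> (\<forall>h\<in>carrier G. circ_mult (circ_mult g k) h = circ_mult g (circ_mult k h))"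
  by (simp add: nu_mult) (auto simp: nu_def restrict_eq_restrict_iff)

text \<open>\<open>N\<close> is regular, so an element of \<open>N\<close> is \<open>\<nu>\<close> of its value at \<open>1\<close>.\<close>

lemma nu_mult_in_nu_image_iff_eq:
  assumes g: "g \<in> carrier G" and k: "k \<in> carrier G"
  shows "nu g \<otimes>\<^bsub>Perm\<^esub> nu k \<in> nu ` carrier G \<longleftrightarrow> nu g \<otimes>\<^bsub>Perm\<^esub> nu k = nu (circ_mult g k)"
proof
  assume "nu g \<otimes>\<^bsub>Perm\<^esub> nu k \<in> nu ` carrier G"
  then obtain m where m: "m \<in> carrier G" and eq: "nu g \<otimes>\<^bsub>Perm\<^esub> nu k = nu m"
    by blast
  have "m = circ_mult g k"
    using fun_cong[OF eq, of \<one>] g k m by (simp add: nu_mult nu_apply_one)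
  then show "nu g \<otimes>\<^bsub>Perm\<^esub> nu k = nu (circ_mult g k)"
    using eq by simp
qed (use g k in simp)

text \<open>For \<open>A = \<psi>(G)\<close> this is condition (1c) of the theorem, for \<open>A = G\<close> condition (2b).\<close>

definition psi_central_commutators :: "'a set \<Rightarrow> bool" where
  "psi_central_commutators A \<longleftrightarrow> (\<forall>a\<in>A. \<forall>k\<in>carrier G. \<psi> (commutator G a k) \<in> centre G)"

lemma circ_mult_assoc_iff:
  "(\<forall>g\<in>carrier G. \<forall>k\<in>carrier G. \<forall>h\<in>carrier G. circ_mult (circ_mult g k) h = circ_mult g (circ_mult k h))
   \<longleftrightarrow> psi_central_commutators (\<psi> ` carrier G)"
proof -
  have assoc_iff: "(\<forall>h\<in>carrier G. circ_mult (circ_mult g k) h = circ_mult g (circ_mult k h))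
        \<longleftrightarrow> \<psi> (commutator G (\<psi> g) (inv k)) \<in> centre G"
    if "g \<in> carrier G" "k \<in> carrier G" for g k
    using that nu_mult_eq_nu_circ_mult_iff nu_mult_in_nu_image_iff_eq nu_mult_in_nu_image_iff by simp
  show ?thesis
    unfolding psi_central_commutators_def
  proof
    assume assoc: "\<forall>g\<in>carrier G. \<forall>k\<in>carrier G. \<forall>h\<in>carrier G. circ_mult (circ_mult g k) h = circ_mult g (circ_mult k h)"
    show "\<forall>a\<in>\<psi> ` carrier G. \<forall>k\<in>carrier G. \<psi> (commutator G a k) \<in> centre G"
    proof (intro ballI, elim imageE)
      fix a g k assume "k \<in> carrier G" "a = \<psi> g" "g \<in> carrier G"
      then show "\<psi> (commutator G a k) \<in> centre G"
        using assoc assoc_iff[of g "inv k"] by simp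
    qed
  qed (auto simp: assoc_iff)
qed

text \<open>The identity of \<open>(G,\<circ>)\<close> is a parameter since the theorem quantifies over it;
  \<open>group_circ_monoid_iff\<close> forces it to be \<open>1\<close>.\<close>

definition circ_monoid :: "'a \<Rightarrow> 'a monoid" where
  "circ_monoid e = \<lparr>carrier = carrier G, monoid.mult = circ_mult, monoid.one = e\<rparr>"

lemma circ_monoid_simps [simp]:
  "carrier (circ_monoid e) = carrier G"
  "x \<otimes>\<^bsub>circ_monoid e\<^esub> y = circ_mult x y"
  "\<one>\<^bsub>circ_monoid e\<^esub> = e"
  by (simp_all add: circ_monoid_def)

lemma group_circ_monoid_iff:
  "group (circ_monoid e) \<longleftrightarrow>
   e = \<one> \<and> (\<forall>g\<in>carrier G. \<forall>k\<in>carrier G. \<forall>h\<in>carrier G. circ_mult (circ_mult g k) h = circ_mult g (circ_mult k h))"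
proof
  assume "group (circ_monoid e)"
  then interpret C: group "circ_monoid e" .
  have "e = circ_mult \<one> e"
    using C.one_closed by simp
  also have "\<dots> = \<one>"
    using C.r_one[of \<one>] by simp
  finally show "e = \<one> \<and> (\<forall>g\<in>carrier G. \<forall>k\<in>carrier G. \<forall>h\<in>carrier G. circ_mult (circ_mult g k) h = circ_mult g (circ_mult k h))"
    using C.m_assoc by simp
next
  assume "e = \<one> \<and> (\<forall>g\<in>carrier G. \<forall>k\<in>carrier G. \<forall>h\<in>carrier G. circ_mult (circ_mult g k) h = circ_mult g (circ_mult k h))"
  then have e: "e = \<one>" and assoc: "\<And>g k h. g \<in> carrier G \<Longrightarrow> k \<in> carrier G \<Longrightarrow> h \<in> carrier G \<Longrightarrow>
      circ_mult (circ_mult g k) h = circ_mult g (circ_mult k h)"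
    by auto
  interpret C: monoid "circ_monoid e"
    by (rule monoidI) (simp_all add: e assoc)
  show "group (circ_monoid e)"
  proof (rule C.group_if_r_inv_ex)
    fix g assume "g \<in> carrier (circ_monoid e)"
    then have "circ_mult g (inv (\<psi> g) \<otimes> inv g \<otimes> \<psi> g) = \<one>" and "inv (\<psi> g) \<otimes> inv g \<otimes> \<psi> g \<in> carrier G"
      by (simp_all add: circ_mult_eq_iff)
    then show "\<exists>y\<in>carrier (circ_monoid e). g \<otimes>\<^bsub>circ_monoid e\<^esub> y = \<one>\<^bsub>circ_monoid e\<^esub>"
      by (auto simp: e)
  qed
qed

lemma subgroup_nu_image_iff:
  "subgroup (nu ` carrier G) Perm \<longleftrightarrow>
   (\<forall>g\<in>carrier G. \<forall>k\<in>carrier G. \<forall>h\<in>carrier G. circ_mult (circ_mult g k) h = circ_mult g (circ_mult k h))"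
proof
  assume "subgroup (nu ` carrier G) Perm"
  then have "nu g \<otimes>\<^bsub>Perm\<^esub> nu k \<in> nu ` carrier G" if "g \<in> carrier G" "k \<in> carrier G" for g k
    using that by (blast intro: subgroup.m_closed)
  then show "\<forall>g\<in>carrier G. \<forall>k\<in>carrier G. \<forall>h\<in>carrier G. circ_mult (circ_mult g k) h = circ_mult g (circ_mult k h)"
    by (simp add: nu_mult_in_nu_image_iff_eq nu_mult_eq_nu_circ_mult_iff)
next
  assume assoc: "\<forall>g\<in>carrier G. \<forall>k\<in>carrier G. \<forall>h\<in>carrier G. circ_mult (circ_mult g k) h = circ_mult g (circ_mult k h)"
  then have "group (circ_monoid \<one>)"
    by (simp add: group_circ_monoid_iff)
  moreover have "nu \<in> hom (circ_monoid \<one>) Perm"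
  proof (rule homI)
    fix g k assume "g \<in> carrier (circ_monoid \<one>)" "k \<in> carrier (circ_monoid \<one>)"
    then show "nu (g \<otimes>\<^bsub>circ_monoid \<one>\<^esub> k) = nu g \<otimes>\<^bsub>Perm\<^esub> nu k"
      using assoc by (subst eq_commute) (simp add: nu_mult_eq_nu_circ_mult_iff)
  qed (simp add: nu_closed)
  ultimately have "group_hom (circ_monoid \<one>) Perm nu"
    by (simp add: group_hom_def group_hom_axioms_def group_BijGroup)
  then show "subgroup (nu ` carrier G) Perm"
    using group_hom.img_is_subgroup by fastforce
qed

lemma nu_conj_lreg:
  assumes k: "k \<in> carrier G" and g: "g \<in> carrier G"
  shows "nu k \<otimes>\<^bsub>Perm\<^esub> lreg G g \<otimes>\<^bsub>Perm\<^esub> inv\<^bsub>Perm\<^esub> nu k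
         = lreg G (k \<otimes> \<psi> k \<otimes> g \<otimes> inv (k \<otimes> \<psi> k))"
proof -
  interpret P: group Perm by (rule group_BijGroup)
  have "nu k \<otimes>\<^bsub>Perm\<^esub> lreg G g = lreg G (k \<otimes> \<psi> k \<otimes> g \<otimes> inv (k \<otimes> \<psi> k)) \<otimes>\<^bsub>Perm\<^esub> nu k"
    using k g nu_closed[of k] lreg_closed[of g] lreg_closed[of "k \<otimes> \<psi> k \<otimes> g \<otimes> inv (k \<otimes> \<psi> k)"]
    by (simp add: BijGroup_mult)
      (simp add: restrict_eq_restrict_iff nu_def lreg_def circ_mult_def m_assoc inv_mult_group)
  then show ?thesis
    using k g nu_closed lreg_closed by (subst P.inv_solve_right') (simp_all add: P.m_closed[simplified])
qed

lemma normalises_nu_image: "normalises_lreg G (nu ` carrier G)"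
  unfolding normalises_lreg_def
proof (intro ballI, elim imageE)
  fix \<eta> k assume \<eta>: "\<eta> = nu k" and k: "k \<in> carrier G"
  have "(\<lambda>g. \<eta> \<otimes>\<^bsub>Perm\<^esub> lreg G g \<otimes>\<^bsub>Perm\<^esub> inv\<^bsub>Perm\<^esub> \<eta>) ` carrier G
        = lreg G ` (\<lambda>g. k \<otimes> \<psi> k \<otimes> g \<otimes> inv (k \<otimes> \<psi> k)) ` carrier G"
    unfolding image_image using \<eta> k by (simp add: nu_conj_lreg)
  then show "(\<lambda>g. \<eta> \<otimes>\<^bsub>Perm\<^esub> lreg G g \<otimes>\<^bsub>Perm\<^esub> inv\<^bsub>Perm\<^esub> \<eta>) ` carrier G = lreg G ` carrier G"
    using k by (simp add: conj_image_carrier)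
qed

lemma lreg_conj_nu:
  assumes g: "g \<in> carrier G" and k: "k \<in> carrier G"
  shows "lreg G g \<otimes>\<^bsub>Perm\<^esub> nu k \<otimes>\<^bsub>Perm\<^esub> inv\<^bsub>Perm\<^esub> lreg G g
         = lmult_conj (g \<otimes> k \<otimes> \<psi> k \<otimes> inv g \<otimes> inv (\<psi> k)) (\<psi> k)"
proof -
  interpret P: group Perm by (rule group_BijGroup)
  define m where "m = g \<otimes> k \<otimes> \<psi> k \<otimes> inv g \<otimes> inv (\<psi> k)"
  have m: "m \<in> carrier G" using g k by (simp add: m_def)
  have "lreg G g \<otimes>\<^bsub>Perm\<^esub> nu k = lmult_conj m (\<psi> k) \<otimes>\<^bsub>Perm\<^esub> lreg G g"
    using g k m nu_closed[of k] lreg_closed[of g] lmult_conj_closed[of m "\<psi> k"]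
    by (simp add: BijGroup_mult)
      (simp add: restrict_eq_restrict_iff nu_def lreg_def lmult_conj_def circ_mult_def m_def m_assoc)
  then show ?thesis
    using g k m nu_closed lreg_closed lmult_conj_closed unfolding m_def
    by (subst P.inv_solve_right') (simp_all add: P.m_closed[simplified])
qed

lemma lreg_conj_nu_in_nu_image_iff:
  assumes g: "g \<in> carrier G" and k: "k \<in> carrier G"
  shows "lreg G g \<otimes>\<^bsub>Perm\<^esub> nu k \<otimes>\<^bsub>Perm\<^esub> inv\<^bsub>Perm\<^esub> lreg G g \<in> nu ` carrier G
         \<longleftrightarrow> \<psi> (commutator G (k \<otimes> \<psi> k) g) \<in> centre G"
proof -
  define c where "c = \<psi> (commutator G (k \<otimes> \<psi> k) g)"
  have "inv (\<psi> (g \<otimes> k \<otimes> \<psi> k \<otimes> inv g \<otimes> inv (\<psi> k))) \<otimes> \<psi> k = inv (\<psi> k) \<otimes> c \<otimes> inv (inv (\<psi> k))"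
    using g k by (simp add: c_def commutator_def m_assoc inv_mult_group)
  also have "\<dots> \<in> centre G \<longleftrightarrow> c \<in> centre G"
    using g k by (intro centre_conj_iff) (simp_all add: c_def)
  finally show ?thesis
    using g k by (simp add: lreg_conj_nu lmult_conj_in_nu_image_iff c_def)
qed

lemma lreg_conj_nu_image_subset_iff:
  assumes g: "g \<in> carrier G"
  shows "(\<lambda>\<eta>. lreg G g \<otimes>\<^bsub>Perm\<^esub> \<eta> \<otimes>\<^bsub>Perm\<^esub> inv\<^bsub>Perm\<^esub> lreg G g) ` nu ` carrier G \<subseteq> nu ` carrier G
         \<longleftrightarrow> (\<forall>k\<in>carrier G. \<psi> (commutator G (k \<otimes> \<psi> k) g) \<in> centre G)"
proof
  assume sub: "(\<lambda>\<eta>. lreg G g \<otimes>\<^bsub>Perm\<^esub> \<eta> \<otimes>\<^bsub>Perm\<^esub> inv\<^bsub>Perm\<^esub> lreg G g) ` nu ` carrier G \<subseteq> nu ` carrier G"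
  show "\<forall>k\<in>carrier G. \<psi> (commutator G (k \<otimes> \<psi> k) g) \<in> centre G"
  proof
    fix k assume k: "k \<in> carrier G"
    then have "lreg G g \<otimes>\<^bsub>Perm\<^esub> nu k \<otimes>\<^bsub>Perm\<^esub> inv\<^bsub>Perm\<^esub> lreg G g \<in> nu ` carrier G"
      using sub by blast
    then show "\<psi> (commutator G (k \<otimes> \<psi> k) g) \<in> centre G"
      using g k by (simp add: lreg_conj_nu_in_nu_image_iff)
  qed
qed (use g in \<open>auto simp: lreg_conj_nu_in_nu_image_iff\<close>)

lemma normalised_by_nu_image_iff:
  "normalised_by_lreg G (nu ` carrier G)
   \<longleftrightarrow> (\<forall>g\<in>carrier G. \<forall>k\<in>carrier G. \<psi> (commutator G (k \<otimes> \<psi> k) g) \<in> centre G)"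
proof -
  interpret P: group Perm by (rule group_BijGroup)
  show ?thesis
  proof (intro iffI ballI)
    fix g k assume "normalised_by_lreg G (nu ` carrier G)" and g: "g \<in> carrier G" and k: "k \<in> carrier G"
    then have "(\<lambda>\<eta>. lreg G g \<otimes>\<^bsub>Perm\<^esub> \<eta> \<otimes>\<^bsub>Perm\<^esub> inv\<^bsub>Perm\<^esub> lreg G g) ` nu ` carrier G \<subseteq> nu ` carrier G"
      unfolding normalised_by_lreg_def by blast
    then show "\<psi> (commutator G (k \<otimes> \<psi> k) g) \<in> centre G"
      using lreg_conj_nu_image_subset_iff[OF g] k by blast
  next
    assume central: "\<forall>g\<in>carrier G. \<forall>k\<in>carrier G. \<psi> (commutator G (k \<otimes> \<psi> k) g) \<in> centre G"
    show "normalised_by_lreg G (nu ` carrier G)"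
      unfolding normalised_by_lreg_def
    proof
      fix g assume g: "g \<in> carrier G"
      show "(\<lambda>\<eta>. lreg G g \<otimes>\<^bsub>Perm\<^esub> \<eta> \<otimes>\<^bsub>Perm\<^esub> inv\<^bsub>Perm\<^esub> lreg G g) ` nu ` carrier G = nu ` carrier G"
      proof (rule P.conj_image_eq_if_subset[where S = "lreg G ` carrier G"])
        fix L assume "L \<in> lreg G ` carrier G"
        then obtain h where "h \<in> carrier G" "L = lreg G h" by blast
        then show "(\<lambda>\<eta>. L \<otimes>\<^bsub>Perm\<^esub> \<eta> \<otimes>\<^bsub>Perm\<^esub> inv\<^bsub>Perm\<^esub> L) ` nu ` carrier G \<subseteq> nu ` carrier G"
          using lreg_conj_nu_image_subset_iff central by blast
      qed (use g lreg_closed nu_closed inv_lreg in auto)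
    qed
  qed
qed

lemma psi_central_commutators_iff:
  assumes "A \<subseteq> carrier G"
  shows "psi_central_commutators A \<longleftrightarrow> \<psi> ` commutator_subgroup G A (carrier G) \<subseteq> centre G"
proof -
  have "\<psi> ` commutator_subgroup G A (carrier G) \<subseteq> centre G
        \<longleftrightarrow> \<psi> ` (\<Union>a\<in>A. \<Union>k\<in>carrier G. {commutator G a k}) \<subseteq> centre G"
    unfolding commutator_subgroup_def commutator_def
    using assms by (intro image_generate_subset_iff subgroup_centre) auto
  then show ?thesis
    unfolding psi_central_commutators_def by blast
qed

lemma psi_central_commutators_mono:
  "A \<subseteq> B \<Longrightarrow> psi_central_commutators B \<Longrightarrow> psi_central_commutators A"
  unfolding psi_central_commutators_def by blast

lemma psi_central_commutators_derived_iff: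
  "psi_central_commutators (carrier G) \<longleftrightarrow> \<psi> ` derived G (carrier G) \<subseteq> centre G"
  by (simp add: psi_central_commutators_iff derived_def commutator_subgroup_def)

lemma psi_central_commutators_twisted_iff:
  assumes "psi_central_commutators (\<psi> ` carrier G)"
  shows "(\<forall>g\<in>carrier G. \<forall>k\<in>carrier G. \<psi> (commutator G (k \<otimes> \<psi> k) g) \<in> centre G)
         \<longleftrightarrow> psi_central_commutators (carrier G)"
proof -
  have "\<psi> (commutator G (k \<otimes> \<psi> k) g) \<in> centre G \<longleftrightarrow> \<psi> (commutator G k g) \<in> centre G"
    if g: "g \<in> carrier G" and k: "k \<in> carrier G" for g k
  proof -
    have c: "\<psi> (commutator G (\<psi> k) g) \<in> centre G"
      using assms g k by (simp add: psi_central_commutators_def)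
    have "\<psi> (commutator G (k \<otimes> \<psi> k) g)
          = \<psi> k \<otimes> \<psi> (commutator G (\<psi> k) g) \<otimes> inv (\<psi> k) \<otimes> \<psi> (commutator G k g)"
      using g k by (simp add: commutator_mult_left)
    also have "\<dots> = \<psi> (commutator G (\<psi> k) g) \<otimes> \<psi> (commutator G k g)"
      using c k by (simp add: centre_conj)
    finally show ?thesis
      using c g k by (simp add: mult_in_centre_iff)
  qed
  then show ?thesis
    unfolding psi_central_commutators_def by auto
qed

lemma circ_monoid_inv:
  assumes grp: "group (circ_monoid \<one>)" and g: "g \<in> carrier G" and y: "y \<in> carrier G"
  shows "circ_mult (inv\<^bsub>circ_monoid \<one>\<^esub> g) y = inv (\<psi> g) \<otimes> inv g \<otimes> y \<otimes> \<psi> g"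
proof -
  interpret C: group "circ_monoid \<one>" by (rule grp)
  have "circ_mult g (circ_mult (inv\<^bsub>circ_monoid \<one>\<^esub> g) y) = circ_mult (circ_mult g (inv\<^bsub>circ_monoid \<one>\<^esub> g)) y"
    using C.m_assoc[of g "inv\<^bsub>circ_monoid \<one>\<^esub> g" y] C.inv_closed g y by simp
  also have "\<dots> = y"
    using C.r_inv g y by simp
  finally show ?thesis
    using C.inv_closed g y by (simp add: circ_mult_eq_iff)
qed

lemma dual_brace_identity_iff:
  assumes grp: "group (circ_monoid \<one>)" and g: "g \<in> carrier G" and h: "h \<in> carrier G"
  shows "(\<forall>k\<in>carrier G. g \<otimes> circ_mult h k = circ_mult (circ_mult (g \<otimes> h) (inv\<^bsub>circ_monoid \<one>\<^esub> g)) (g \<otimes> k))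
         \<longleftrightarrow> \<psi> (commutator G g (inv h)) \<in> centre G"
proof -
  interpret C: group "circ_monoid \<one>" by (rule grp)
  define a where "a = \<psi> g \<otimes> \<psi> h \<otimes> inv (\<psi> g)"
  have a: "a \<in> carrier G" using g h by (simp add: a_def)
  have "circ_mult (circ_mult (g \<otimes> h) (inv\<^bsub>circ_monoid \<one>\<^esub> g)) (g \<otimes> k) = g \<otimes> h \<otimes> (a \<otimes> k \<otimes> inv a)"
    if k: "k \<in> carrier G" for k
  proof -
    have "circ_mult (circ_mult (g \<otimes> h) (inv\<^bsub>circ_monoid \<one>\<^esub> g)) (g \<otimes> k)
          = circ_mult (g \<otimes> h) (circ_mult (inv\<^bsub>circ_monoid \<one>\<^esub> g) (g \<otimes> k))"
      using C.m_assoc[of "g \<otimes> h" "inv\<^bsub>circ_monoid \<one>\<^esub> g" "g \<otimes> k"] C.inv_closed g h k by simp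
    also have "\<dots> = g \<otimes> h \<otimes> (a \<otimes> k \<otimes> inv a)"
      using g h k
      by (simp add: circ_monoid_inv[OF grp]) (simp add: circ_mult_def a_def m_assoc inv_mult_group)
    finally show ?thesis .
  qed
  moreover have "g \<otimes> circ_mult h k = g \<otimes> h \<otimes> (\<psi> h \<otimes> k \<otimes> inv (\<psi> h))" if k: "k \<in> carrier G" for k
    using g h k by (simp add: circ_mult_def m_assoc)
  ultimately have "(\<forall>k\<in>carrier G. g \<otimes> circ_mult h k = circ_mult (circ_mult (g \<otimes> h) (inv\<^bsub>circ_monoid \<one>\<^esub> g)) (g \<otimes> k))
        \<longleftrightarrow> (\<forall>k\<in>carrier G. \<psi> h \<otimes> k \<otimes> inv (\<psi> h) = a \<otimes> k \<otimes> inv a)"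
    using g h a by simp
  also have "\<dots> \<longleftrightarrow> inv a \<otimes> \<psi> h \<in> centre G"
    using a h by (simp add: conj_eq_conj_iff)
  also have "inv a \<otimes> \<psi> h = \<psi> (commutator G g (inv h))"
    using g h by (simp add: a_def commutator_def m_assoc inv_mult_group)
  finally show ?thesis .
qed

lemma skew_brace_circ_monoid_iff:
  "skew_brace G (circ_monoid e) \<longleftrightarrow> e = \<one> \<and> psi_central_commutators (\<psi> ` carrier G)"
  by (simp add: skew_brace_def circ_mult_skew_distrib group_circ_monoid_iff circ_mult_assoc_iff
      psi_central_commutators_def)

lemma bi_skew_brace_circ_monoid_iff:
  "bi_skew_brace G (circ_monoid e) \<longleftrightarrow> e = \<one> \<and> psi_central_commutators (carrier G)"
proof (cases "e = \<one> \<and> psi_central_commutators (\<psi> ` carrier G)")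
  case True
  then have grp: "group (circ_monoid \<one>)"
    by (simp add: group_circ_monoid_iff circ_mult_assoc_iff psi_central_commutators_def)
  have "skew_brace (circ_monoid \<one>) G
        \<longleftrightarrow> (\<forall>g\<in>carrier G. \<forall>h\<in>carrier G. \<psi> (commutator G g (inv h)) \<in> centre G)"
    using grp by (simp add: skew_brace_def dual_brace_identity_iff)
  also have "\<dots> \<longleftrightarrow> psi_central_commutators (carrier G)"
    unfolding psi_central_commutators_def
  proof (intro iffI ballI)
    fix g k assume central: "\<forall>g\<in>carrier G. \<forall>h\<in>carrier G. \<psi> (commutator G g (inv h)) \<in> centre G"
      and "g \<in> carrier G" "k \<in> carrier G"
    then show "\<psi> (commutator G g k) \<in> centre G"
      using central[rule_format, of g "inv k"] by simp
  qed simp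
  finally show ?thesis
    using True by (simp add: bi_skew_brace_def skew_brace_circ_monoid_iff)
next
  case False
  moreover have "psi_central_commutators (carrier G) \<Longrightarrow> psi_central_commutators (\<psi> ` carrier G)"
    by (rule psi_central_commutators_mono) auto
  ultimately show ?thesis
    by (auto simp: bi_skew_brace_def skew_brace_circ_monoid_iff)
qed

end

theorem theorem1p2:
  fixes G :: "'a monoid" and \<psi> :: "'a \<Rightarrow> 'a"
  assumes "group G" and "\<psi> \<in> hom G G"
  defines "\<nu> \<equiv> \<lambda>g. (\<lambda>h \<in> carrier G. g \<otimes>\<^bsub>G\<^esub> \<psi> g \<otimes>\<^bsub>G\<^esub> h \<otimes>\<^bsub>G\<^esub> inv\<^bsub>G\<^esub> \<psi> g)"
  defines "N \<equiv> \<nu> ` carrier G"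
  defines "circ \<equiv> \<lambda>g h. g \<otimes>\<^bsub>G\<^esub> \<psi> g \<otimes>\<^bsub>G\<^esub> h \<otimes>\<^bsub>G\<^esub> inv\<^bsub>G\<^esub> \<psi> g"
  shows
    "((subgroup N (BijGroup (carrier G))
        \<longleftrightarrow> subgroup N (BijGroup (carrier G)) \<and> regular_perm G N \<and> normalises_lreg G N)
     \<and> (subgroup N (BijGroup (carrier G))
        \<longleftrightarrow> \<psi> ` commutator_subgroup G (\<psi> ` carrier G) (carrier G) \<subseteq> centre G)
     \<and> (subgroup N (BijGroup (carrier G))
        \<longleftrightarrow> (\<exists>e. skew_brace G \<lparr>carrier = carrier G, monoid.mult = circ, monoid.one = e\<rparr>)))
  \<and> ((subgroup N (BijGroup (carrier G)) \<and> regular_perm G N \<and> normalises_lreg G N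
        \<and> normalised_by_lreg G N
        \<longleftrightarrow> \<psi> ` derived G (carrier G) \<subseteq> centre G)
     \<and> (\<psi> ` derived G (carrier G) \<subseteq> centre G
        \<longleftrightarrow> (\<exists>e. bi_skew_brace G \<lparr>carrier = carrier G, monoid.mult = circ, monoid.one = e\<rparr>)))"
proof -
  interpret group_endo G \<psi>
    using assms(1,2) by (simp add: group_endo_def group_hom_def group_hom_axioms_def)
  have N: "N = nu ` carrier G"
    by (simp add: N_def \<nu>_def nu_def circ_mult_def)
  have circ_structure: "\<lparr>carrier = carrier G, monoid.mult = circ, monoid.one = e\<rparr> = circ_monoid e" for e
    by (simp add: circ_def circ_monoid_def circ_mult_def fun_eq_iff)
  have subgroup_iff: "subgroup N Perm \<longleftrightarrow> psi_central_commutators (\<psi> ` carrier G)"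
    by (simp add: N subgroup_nu_image_iff circ_mult_assoc_iff)
  have normalised_iff: "psi_central_commutators (\<psi> ` carrier G) \<Longrightarrow>
      normalised_by_lreg G N \<longleftrightarrow> psi_central_commutators (carrier G)"
    by (simp add: N normalised_by_nu_image_iff psi_central_commutators_twisted_iff)
  have psi_image: "\<psi> ` carrier G \<subseteq> carrier G"
    by auto
  have "regular_perm G N" "normalises_lreg G N"
    by (simp_all add: N regular_nu_image normalises_nu_image)
  then show ?thesis
    unfolding circ_structure
    using psi_central_commutators_mono[OF psi_image] normalised_iff
    by (simp add: subgroup_iff psi_central_commutators_iff[OF psi_image] psi_central_commutators_derived_iff
        skew_brace_circ_monoid_iff bi_skew_brace_circ_monoid_iff) blast
qed

end
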